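(* For every $n\in\mathbb{N}$ and every $l\in\{0,\ldots,n-1\}$ the polynomials $A_n^l$ defined in the context satisfy the two-step recurrence $$A_{n+1}^{l}=\frac{n+1}{2(n-l+1)(n+l+2)}\Big[\big((2n+3)\mathbf{x}+(2n+1)\overline{\mathbf{x}}\big)A_{n}^{l}-2n\,\mathbf{x}\overline{\mathbf{x}}\,A_{n-1}^{l}\Big],$$ and for every $l\in\mathbb{N}_0$, $$A_{l+1}^{l}=\tfrac14\big[(2l+3)\mathbf{x}+(2l+1)\overline{\mathbf{x}}\big]A_{l}^{l},\qquad A_{l}^{l}=(x_1-x_2\mathbf{e}_3)^l .$$
   Context: $\mathbb{H}$: real quaternions with basis $\mathbf{e}_0=1,\mathbf{e}_1,\mathbf{e}_2,\mathbf{e}_3$, $\mathbf{e}_i\mathbf{e}_j+\mathbf{e}_j\mathbf{e}_i=-2\delta_{ij}$ ($i,j=1,2,3$), $\mathbf{e}_1\mathbf{e}_2=\mathbf{e}_3$. A point $(x_0,x_1,x_2)\in\mathbb{R}^3$ is identified with $\mathbf{x}=x_0+x_1\mathbf{e}_1+x_2\mathbf{e}_2$, and $\overline{\mathbf{x}}=x_0-x_1\mathbf{e}_1-x_2\mathbf{e}_2$. Spherical coordinates: $x_0=r\cos\theta$, $x_1=r\sin\theta\cos\varphi$, $x_2=r\sin\theta\sin\varphi$. Let $P_k$ be the Legendre polynomials and $P_k^m(t)=(1-t^2)^{m/2}\frac{d^m}{dt^m}P_k(t)$ (no Condon–Shortley phase; $P_k^m=0$ for $m>k$). For $n\in\mathbb{N}_0$,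 $0\le m\le n+1$ put $$\mathcal{A}^{m,n}(\theta)=\tfrac12\Big(\sin^2\theta\,\tfrac{d}{dt}[P_{n+1}^m(t)]_{t=\cos\theta}+(n+1)\cos\theta\,P_{n+1}^m(\cos\theta)\Big).$$ For $n\in\mathbb{N}_0$, $l=0,\ldots,n$ define $$A_n^l(\mathbf{x})=\frac{2^{l+1}n!\,r^n}{(n+l+2)!}\Big[(n+l+2)\mathcal{A}^{l,n}(\theta)\big(\cos l\varphi-\sin l\varphi\,\mathbf{e}_3\big)+\mathcal{A}^{l+1,n}(\theta)\big(\cos((l+1)\varphi)\,\mathbf{e}_1+\sin((l+1)\varphi)\,\mathbf{e}_2\big)\Big],$$ a homogeneous polynomial of degree $n$ in $x_0,x_1,x_2$. *)

theory Defs
  imports "HOL-Analysis.Analysis" "HOL-Computational_Algebra.Polynomial"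
begin

text \<open>Quaternion q0 + q1 e1 + q2 e2 + q3 e3 with e1 e2 = e3, ei^2 = -1.\<close>

datatype quat = Quat (q0: real) (q1: real) (q2: real) (q3: real)

instantiation quat :: real_algebra_1
begin

definition "0 = Quat 0 0 0 0"
definition "1 = Quat 1 0 0 0"
definition "a + b = Quat (q0 a + q0 b) (q1 a + q1 b) (q2 a + q2 b) (q3 a + q3 b)"
definition "a - b = Quat (q0 a - q0 b) (q1 a - q1 b) (q2 a - q2 b) (q3 a - q3 b)"
definition "- a = Quat (- q0 a) (- q1 a) (- q2 a) (- q3 a)"
definition "scaleR c a = Quat (c * q0 a) (c * q1 a) (c * q2 a) (c * q3 a)"
definition "a * b = Quat
   (q0 a * q0 b - q1 a * q1 b - q2 a * q2 b - q3 a * q3 b)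
   (q0 a * q1 b + q1 a * q0 b + q2 a * q3 b - q3 a * q2 b)
   (q0 a * q2 b - q1 a * q3 b + q2 a * q0 b + q3 a * q1 b)
   (q0 a * q3 b + q1 a * q2 b - q2 a * q1 b + q3 a * q0 b)"

instance
  by standard (auto simp: zero_quat_def one_quat_def plus_quat_def minus_quat_def
      uminus_quat_def scaleR_quat_def times_quat_def algebra_simps intro: quat.expand)

end

definition qe1 :: quat where "qe1 = Quat 0 1 0 0"
definition qe2 :: quat where "qe2 = Quat 0 0 1 0"
definition qe3 :: quat where "qe3 = Quat 0 0 0 1"

definition vecq :: "real \<Rightarrow> real \<Rightarrow> real \<Rightarrow> quat" where
  "vecq x0 x1 x2 = of_real x0 + x1 *\<^sub>R qe1 + x2 *\<^sub>R qe2"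
definition vecq_cnj :: "real \<Rightarrow> real \<Rightarrow> real \<Rightarrow> quat" where
  "vecq_cnj x0 x1 x2 = of_real x0 - x1 *\<^sub>R qe1 - x2 *\<^sub>R qe2"

definition legendre :: "nat \<Rightarrow> real poly" where
  "legendre k = smult (1 / (2 ^ k * fact k)) ((pderiv ^^ k) ([:-1, 0, 1:] ^ k))"

text \<open>P_k^m(t) = (1-t^2)^(m/2) (d/dt)^m P_k(t), no Condon--Shortley phase.\<close>
definition assoc_legendre :: "nat \<Rightarrow> nat \<Rightarrow> real \<Rightarrow> real" where
  "assoc_legendre k m t = sqrt (1 - t\<^sup>2) ^ m * poly ((pderiv ^^ m) (legendre k)) t"

definition calA :: "nat \<Rightarrow> nat \<Rightarrow> real \<Rightarrow> real" where
  "calA m n \<theta> = (1/2) * ((sin \<theta>)\<^sup>2 * deriv (assoc_legendre (n + 1) m) (cos \<theta>)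
      + real (n + 1) * cos \<theta> * assoc_legendre (n + 1) m (cos \<theta>))"

text \<open>A_n^l evaluated at the point with spherical coordinates (r, theta, phi).\<close>
definition An :: "nat \<Rightarrow> nat \<Rightarrow> real \<Rightarrow> real \<Rightarrow> real \<Rightarrow> quat" where
  "An n l r \<theta> \<phi> =
     (2 ^ (l + 1) * fact n * r ^ n / fact (n + l + 2)) *\<^sub>R
       ((real (n + l + 2) * calA l n \<theta>) *\<^sub>R (of_real (cos (real l * \<phi>)) - sin (real l * \<phi>) *\<^sub>R qe3)
        + calA (l + 1) n \<theta> *\<^sub>R (cos (real (l + 1) * \<phi>) *\<^sub>R qe1 + sin (real (l + 1) * \<phi>) *\<^sub>R qe2))"

end

theory Submission
  imports Defs
begin

text \<open>
  Put S n m t = n!/(n+m)! * P_n^(m)(t). Evaluating the associated Legendre functions in calA shows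
  that A_n^l = 2^l r^n sin^l \<theta> (S n l (cos \<theta>) frame0 + sin \<theta> S n (l+1) (cos \<theta>) frame1), where
  frame0 = cos l\<phi> - sin l\<phi> e3 and frame1 = cos (l+1)\<phi> e1 + sin (l+1)\<phi> e2. The unit vector
  u = cos \<phi> e1 + sin \<phi> e2 satisfies u frame0 = frame1 and u frame1 = - frame0, and x and its
  conjugate are r cos \<theta> \<plusminus> r sin \<theta> u. So left multiplication by x and its conjugate acts on the
  two coefficients like multiplication by a complex number, and the quaternionic recurrences
  reduce to two real three-term recurrences for S. These follow from Rodrigues' formula through
  P'_(k+1) = (k+1) P_k + t P'_k and P'_(k+2) = (2k+3) P_(k+1) + P'_k.
\<close>

section \<open>Derivatives of Legendre polynomials\<close>

lemma higher_pderiv_x_mult: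
  "(pderiv ^^ Suc m) ([:0, 1:] * p) =
     [:0, 1:] * (pderiv ^^ Suc m) p + smult (of_nat (Suc m)) ((pderiv ^^ m) p)"
proof (induction m)
  case 0
  then show ?case by (simp add: pderiv_mult pderiv_pCons add.commute)
next
  case (Suc m)
  then show ?case
    by (simp add: pderiv_add pderiv_mult pderiv_smult pderiv_pCons smult_add_left algebra_simps)
qed

lemma higher_pderiv_eq_0:
  assumes "degree p < m"
  shows "(pderiv ^^ m) p = 0"
proof (rule poly_eqI)
  fix n
  show "coeff ((pderiv ^^ m) p) n = coeff 0 n"
    using assms by (simp add: coeff_higher_pderiv coeff_eq_0)
qed

lemma higher_pderiv_rodrigues:
  "(pderiv ^^ (k + m)) ([:-1, 0, 1:] ^ k) = smult (2 ^ k * fact k) ((pderiv ^^ m) (legendre k))"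
proof -
  have "(pderiv ^^ (k + m)) p = (pderiv ^^ m) ((pderiv ^^ k) p)" for p :: "real poly"
    by (metis add.commute comp_apply funpow_add)
  then show ?thesis by (simp add: legendre_def higher_pderiv_smult)
qed

lemma pderiv_x2_minus_1_power:
  "pderiv ([:-1, 0, 1:] ^ Suc k) = smult (2 * of_nat (Suc k)) ([:0, 1:] * [:-1, 0, 1:] ^ k :: real poly)"
  unfolding pderiv_power_Suc by (simp add: pderiv_pCons algebra_simps smult_add_left mult.commute)

lemma pderiv_legendre_Suc:
  "pderiv (legendre (Suc k)) = smult (of_nat (Suc k)) (legendre k) + [:0, 1:] * pderiv (legendre k)"
proof -
  have "smult (2 ^ Suc k * fact (Suc k)) (pderiv (legendre (Suc k)))
      = (pderiv ^^ Suc k) (pderiv ([:-1, 0, 1:] ^ Suc k))"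
    using higher_pderiv_rodrigues[of "Suc k" 1] by (simp add: funpow_swap1 del: power_Suc)
  also have "\<dots> = smult (2 * of_nat (Suc k))
      ([:0, 1:] * (pderiv ^^ Suc k) ([:-1, 0, 1:] ^ k) + smult (of_nat (Suc k)) ((pderiv ^^ k) ([:-1, 0, 1:] ^ k)))"
    by (simp only: pderiv_x2_minus_1_power higher_pderiv_smult higher_pderiv_x_mult)
  also have "\<dots> = smult (2 ^ Suc k * fact (Suc k))
      (smult (of_nat (Suc k)) (legendre k) + [:0, 1:] * pderiv (legendre k))"
    using higher_pderiv_rodrigues[of k 1] higher_pderiv_rodrigues[of k 0]
    by (simp add: smult_add_right algebra_simps)
  finally show ?thesis by (rule smult_cancel[rotated]) simp
qed

lemma pderiv2_x2_minus_1_power: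
  "pderiv (pderiv ([:-1, 0, 1:] ^ Suc (Suc k))) =
     smult (2 * of_nat (Suc (Suc k)))
       (smult (2 * of_nat k + 3) ([:-1, 0, 1:] ^ Suc k) + smult (2 * of_nat (Suc k)) ([:-1, 0, 1:] ^ k)
        :: real poly)"
proof -
  have x2: "[:0, 1:] * ([:0, 1:] * [:-1, 0, 1:] ^ k) = [:-1, 0, 1:] ^ Suc k + ([:-1, 0, 1:] ^ k :: real poly)"
    by (simp add: algebra_simps)
  have "pderiv ([:0, 1:] * [:-1, 0, 1:] ^ Suc k)
      = [:-1, 0, 1:] ^ Suc k + [:0, 1:] * pderiv ([:-1, 0, 1:] ^ Suc k :: real poly)"
    by (simp add: pderiv_mult pderiv_pCons del: power_Suc)
  also have "\<dots> = smult (2 * of_nat k + 3) ([:-1, 0, 1:] ^ Suc k) + smult (2 * of_nat (Suc k)) ([:-1, 0, 1:] ^ k)"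
    unfolding pderiv_x2_minus_1_power mult_smult_right x2 by (simp add: poly_eq_iff algebra_simps del: power_Suc)
  finally show ?thesis
    by (simp only: pderiv_x2_minus_1_power pderiv_smult)
qed

lemma pderiv_legendre_Suc_Suc:
  "pderiv (legendre (Suc (Suc k))) = smult (2 * of_nat k + 3) (legendre (Suc k)) + pderiv (legendre k)"
proof -
  have "smult (2 ^ Suc (Suc k) * fact (Suc (Suc k))) (pderiv (legendre (Suc (Suc k))))
      = (pderiv ^^ Suc k) (pderiv (pderiv ([:-1, 0, 1:] ^ Suc (Suc k))))"
    using higher_pderiv_rodrigues[of "Suc (Suc k)" 1] by (simp add: funpow_swap1 del: power_Suc)
  also have "\<dots> = smult (2 * of_nat (Suc (Suc k)))
      (smult (2 * of_nat k + 3) ((pderiv ^^ Suc k) ([:-1, 0, 1:] ^ Suc k))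
       + smult (2 * of_nat (Suc k)) ((pderiv ^^ Suc k) ([:-1, 0, 1:] ^ k)))"
    by (simp only: pderiv2_x2_minus_1_power higher_pderiv_smult higher_pderiv_add)
  also have "\<dots> = smult (2 ^ Suc (Suc k) * fact (Suc (Suc k)))
      (smult (2 * of_nat k + 3) (legendre (Suc k)) + pderiv (legendre k))"
    using higher_pderiv_rodrigues[of "Suc k" 0] higher_pderiv_rodrigues[of k 1]
    by (simp add: smult_add_right algebra_simps)
  finally show ?thesis by (rule smult_cancel[rotated]) simp
qed

lemma higher_pderiv_legendre_Suc:
  "(pderiv ^^ Suc m) (legendre (Suc k)) =
     smult (of_nat (Suc k + m)) ((pderiv ^^ m) (legendre k)) + [:0, 1:] * (pderiv ^^ Suc m) (legendre k)"
proof (induction m)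
  case 0
  then show ?case by (simp add: pderiv_legendre_Suc)
next
  case (Suc m)
  have "(pderiv ^^ Suc (Suc m)) (legendre (Suc k)) = pderiv ((pderiv ^^ Suc m) (legendre (Suc k)))"
    by simp
  also have "\<dots> = pderiv (smult (of_nat (Suc k + m)) ((pderiv ^^ m) (legendre k))
      + [:0, 1:] * (pderiv ^^ Suc m) (legendre k))"
    by (simp only: Suc.IH)
  also have "\<dots> = smult (of_nat (Suc k + Suc m)) ((pderiv ^^ Suc m) (legendre k))
      + [:0, 1:] * (pderiv ^^ Suc (Suc m)) (legendre k)"
    by (simp add: pderiv_add pderiv_smult pderiv_mult pderiv_pCons poly_eq_iff algebra_simps)
  finally show ?case .
qed

lemma higher_pderiv_legendre_Suc_Suc:
  "(pderiv ^^ Suc m) (legendre (Suc (Suc k))) =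
     smult (2 * of_nat k + 3) ((pderiv ^^ m) (legendre (Suc k))) + (pderiv ^^ Suc m) (legendre k)"
  by (simp add: funpow_Suc_right pderiv_legendre_Suc_Suc higher_pderiv_add higher_pderiv_smult
      del: funpow.simps)

definition legendre_deriv :: "nat \<Rightarrow> nat \<Rightarrow> real \<Rightarrow> real" where
  "legendre_deriv k m t = poly ((pderiv ^^ m) (legendre k)) t"

lemma legendre_deriv_Suc:
  "legendre_deriv (Suc k) (Suc m) t = (real k + 1 + real m) * legendre_deriv k m t + t * legendre_deriv k (Suc m) t"
  unfolding legendre_deriv_def higher_pderiv_legendre_Suc by simp

lemma legendre_deriv_Suc_Suc:
  "legendre_deriv (Suc (Suc k)) (Suc m) t = (2 * real k + 3) * legendre_deriv (Suc k) m t + legendre_deriv k (Suc m) t"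
  unfolding legendre_deriv_def higher_pderiv_legendre_Suc_Suc by simp

lemma legendre_deriv_eq_0:
  assumes "k < m"
  shows "legendre_deriv k m t = 0"
proof -
  have "degree ([:-1, 0, 1:] ^ k :: real poly) \<le> 2 * k"
    using degree_power_le[of "[:-1, 0, 1:]" k] by (simp add: mult_2)
  then have "degree ((pderiv ^^ k) ([:-1, 0, 1:] ^ k) :: real poly) \<le> k"
    by (simp add: degree_higher_pderiv)
  then have "degree (legendre k) < m"
    using assms by (simp add: legendre_def)
  then show ?thesis
    by (simp add: legendre_deriv_def higher_pderiv_eq_0)
qed

lemma legendre_deriv_Suc_diff:
  "t * legendre_deriv (Suc k) (Suc m) t - legendre_deriv k (Suc m) t = (real k + 1 - real m) * legendre_deriv (Suc k) m t"
  using legendre_deriv_Suc_Suc[of k m t] legendre_deriv_Suc[of "Suc k" m t] by (simp add: algebra_simps)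

lemma legendre_deriv_one_minus_sq:
  "(1 - t\<^sup>2) * legendre_deriv (Suc k) (Suc m) t + (real k + 1 - real m) * t * legendre_deriv (Suc k) m t
     = (real k + 1 + real m) * legendre_deriv k m t"
proof -
  have "t * (t * legendre_deriv (Suc k) (Suc m) t - legendre_deriv k (Suc m) t)
      = t * ((real k + 1 - real m) * legendre_deriv (Suc k) m t)"
    by (simp only: legendre_deriv_Suc_diff)
  then show ?thesis
    using legendre_deriv_Suc[of k m t] by (simp add: algebra_simps power2_eq_square)
qed

lemma legendre_deriv_three_term:
  "(real k + 2 - real m) * legendre_deriv (Suc (Suc k)) m t
     = (2 * real k + 3) * t * legendre_deriv (Suc k) m t - (real k + 1 + real m) * legendre_deriv k m t"
  using legendre_deriv_Suc_diff[of t "Suc k" m] legendre_deriv_Suc[of "Suc k" m t]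
    legendre_deriv_one_minus_sq[of t k m]
  by (simp add: algebra_simps power2_eq_square)

definition scaled_legendre_deriv :: "nat \<Rightarrow> nat \<Rightarrow> real \<Rightarrow> real" where
  "scaled_legendre_deriv n m t = fact n / fact (n + m) * legendre_deriv n m t"

lemma legendre_deriv_three_term_Suc:
  "(real k + 2 - real m) * legendre_deriv (Suc (Suc k)) (Suc m) t
     = (2 * real k + 4) * t * legendre_deriv (Suc k) (Suc m) t
       + (real k + real m + 2) * (legendre_deriv (Suc k) m t - legendre_deriv k (Suc m) t)"
  using legendre_deriv_three_term[of k "Suc m" t] legendre_deriv_Suc[of "Suc k" m t]
  by (simp add: algebra_simps)

lemma scaled_legendre_deriv_three_term:
  assumes "m \<noteq> k + 2"
  shows "scaled_legendre_deriv (k + 2) m t =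
    (real k + 2) / (2 * (real k + 2 - real m) * (real k + real m + 3)) *
      ((4 * real k + 8) * t * scaled_legendre_deriv (k + 1) m t
       - 2 * (1 - t\<^sup>2) * scaled_legendre_deriv (k + 1) (m + 1) t
       - 2 * (real k + 1) * scaled_legendre_deriv k m t)"
proof -
  define Y :: real where "Y = fact (k + 1) / fact (k + m + 2)"
  define P0 P1 where "P0 = legendre_deriv k m t" and "P1 = legendre_deriv (k + 1) m t"
  define Q where "Q = (2 * real k + 3) * t * P1 - (real k + 1 + real m) * P0"
  define D E where "D = real k + 2 - real m" and "E = real k + real m + 3"
  have "D \<noteq> 0" using assms by (simp add: D_def)
  have pos: "real k + real m + 1 > 0" "real k + real m + 2 > 0" "E > 0"
    unfolding E_def by linarith+
  have F: "fact (k + m + 2) = (real k + real m + 2) * fact (k + m + 1)"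
    "fact (k + m + 1) = (real k + real m + 1) * fact (k + m)"
    "fact (k + 1) = (real k + 1) * fact k" "fact (k + 2) = (real k + 2) * fact (k + 1)"
    by (simp_all add: algebra_simps)
  have "scaled_legendre_deriv (k + 2) m t = (real k + 2) * Y * legendre_deriv (k + 2) m t"
    by (simp add: scaled_legendre_deriv_def Y_def F(4) add_ac)
  moreover have "legendre_deriv (k + 2) m t = Q / D"
    using legendre_deriv_three_term[of k m t] \<open>D \<noteq> 0\<close>
    by (simp add: D_def Q_def P0_def P1_def eq_divide_eq mult.commute)
  ultimately have top: "scaled_legendre_deriv (k + 2) m t = (real k + 2) * Y * Q / D"
    by simp
  have mid: "scaled_legendre_deriv (k + 1) m t = Y * (real k + real m + 2) * P1"
    by (simp add: scaled_legendre_deriv_def Y_def P1_def F(1) add_ac)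
  have "(1 - t\<^sup>2) * legendre_deriv (k + 1) (m + 1) t
      = (real k + 1 + real m) * P0 - (real k + 1 - real m) * t * P1"
    using legendre_deriv_one_minus_sq[of t k m] by (simp add: P0_def P1_def eq_diff_eq)
  then have sq: "(1 - t\<^sup>2) * scaled_legendre_deriv (k + 1) (m + 1) t
      = Y * ((real k + 1 + real m) * P0 - (real k + 1 - real m) * t * P1)"
    by (simp add: scaled_legendre_deriv_def Y_def add_ac mult.left_commute)
  have "Y * (real k + real m + 2) * (real k + real m + 1) = fact (k + 1) / fact (k + m)"
    unfolding Y_def F(1,2) using pos by (simp add: divide_simps)
  then have low: "(real k + 1) * scaled_legendre_deriv k m t
      = Y * (real k + real m + 2) * (real k + real m + 1) * P0"
    by (simp add: scaled_legendre_deriv_def P0_def F(3))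
  have bracket: "(4 * real k + 8) * t * scaled_legendre_deriv (k + 1) m t
       - 2 * (1 - t\<^sup>2) * scaled_legendre_deriv (k + 1) (m + 1) t
       - 2 * (real k + 1) * scaled_legendre_deriv k m t
     = 2 * E * (Y * Q)"
    unfolding mult.assoc[of 2] mid sq low by (simp add: E_def Q_def algebra_simps)
  show ?thesis
    unfolding top bracket D_def[symmetric] E_def[symmetric]
    using \<open>D \<noteq> 0\<close> pos(3) by (simp add: field_simps)
qed

lemma scaled_legendre_deriv_three_term_Suc:
  assumes "m \<noteq> k + 2"
  shows "scaled_legendre_deriv (k + 2) (m + 1) t =
    (real k + 2) / (2 * (real k + 2 - real m) * (real k + real m + 3)) *
      ((4 * real k + 8) * t * scaled_legendre_deriv (k + 1) (m + 1) t
       + 2 * scaled_legendre_deriv (k + 1) m t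
       - 2 * (real k + 1) * scaled_legendre_deriv k (m + 1) t)"
proof -
  define Z :: real where "Z = fact (k + 1) / fact (k + m + 3)"
  define P0 P1 P1' where "P0 = legendre_deriv k (m + 1) t" and "P1 = legendre_deriv (k + 1) m t"
    and "P1' = legendre_deriv (k + 1) (m + 1) t"
  define Q where "Q = (2 * real k + 4) * t * P1' + (real k + real m + 2) * (P1 - P0)"
  define D E where "D = real k + 2 - real m" and "E = real k + real m + 3"
  have "D \<noteq> 0" using assms by (simp add: D_def)
  have pos: "real k + real m + 2 > 0" "E > 0"
    unfolding E_def by linarith+
  have F: "fact (k + m + 3) = E * fact (k + m + 2)"
    "fact (k + m + 2) = (real k + real m + 2) * fact (k + m + 1)"
    "fact (k + 1) = (real k + 1) * fact k" "fact (k + 2) = (real k + 2) * fact (k + 1)"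
    by (simp_all add: E_def numeral_3_eq_3 algebra_simps)
  have "scaled_legendre_deriv (k + 2) (m + 1) t = (real k + 2) * Z * legendre_deriv (k + 2) (m + 1) t"
  proof -
    have idx: "k + 2 + (m + 1) = k + m + 3" by simp
    show ?thesis unfolding scaled_legendre_deriv_def Z_def F(4) idx by simp
  qed
  moreover have "legendre_deriv (k + 2) (m + 1) t = Q / D"
    using legendre_deriv_three_term_Suc[of k m t] \<open>D \<noteq> 0\<close>
    by (simp add: D_def Q_def P0_def P1_def P1'_def eq_divide_eq mult.commute)
  ultimately have top: "scaled_legendre_deriv (k + 2) (m + 1) t = (real k + 2) * Z * Q / D"
    by simp
  have ZE: "Z * E = fact (k + 1) / fact (k + m + 2)"
    unfolding Z_def F(1) using pos by (simp add: divide_simps)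
  have ZEE: "Z * E * (real k + real m + 2) = fact (k + 1) / fact (k + m + 1)"
    unfolding ZE F(2) using pos by (simp add: divide_simps)
  have mid': "scaled_legendre_deriv (k + 1) (m + 1) t = Z * E * P1'"
    unfolding ZE by (simp add: scaled_legendre_deriv_def P1'_def add_ac)
  have mid: "scaled_legendre_deriv (k + 1) m t = Z * E * (real k + real m + 2) * P1"
    unfolding ZEE by (simp add: scaled_legendre_deriv_def P1_def add_ac)
  have low: "(real k + 1) * scaled_legendre_deriv k (m + 1) t = Z * E * (real k + real m + 2) * P0"
    unfolding ZEE by (simp add: scaled_legendre_deriv_def P0_def F(3) add_ac)
  have bracket: "(4 * real k + 8) * t * scaled_legendre_deriv (k + 1) (m + 1) t
       + 2 * scaled_legendre_deriv (k + 1) m t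
       - 2 * (real k + 1) * scaled_legendre_deriv k (m + 1) t
     = 2 * E * (Z * Q)"
    unfolding mult.assoc[of 2] mid' mid low by (simp add: Q_def algebra_simps)
  show ?thesis
    unfolding top bracket D_def[symmetric] E_def[symmetric]
    using \<open>D \<noteq> 0\<close> pos(2) by (simp add: field_simps)
qed

lemma legendre_deriv_diag_Suc:
  "legendre_deriv (Suc l) (Suc l) t = (2 * real l + 1) * legendre_deriv l l t"
  using legendre_deriv_Suc[of l l t] legendre_deriv_eq_0[of l "Suc l" t] by simp

lemma legendre_deriv_subdiag:
  "legendre_deriv (Suc l) l t = t * legendre_deriv (Suc l) (Suc l) t"
  using legendre_deriv_Suc_diff[of t l l] legendre_deriv_eq_0[of l "Suc l" t] by simp

lemma scaled_legendre_deriv_diag: "scaled_legendre_deriv l l t = 1 / 2 ^ l"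
proof (induction l)
  case 0
  show ?case by (simp add: scaled_legendre_deriv_def legendre_deriv_def legendre_def)
next
  case (Suc l)
  have "fact (Suc l + Suc l) = (2 * real l + 2) * (2 * real l + 1) * (fact (l + l) :: real)"
    by (simp add: algebra_simps)
  moreover have "2 * real l + 1 > 0" by simp
  ultimately have "scaled_legendre_deriv (Suc l) (Suc l) t = scaled_legendre_deriv l l t / 2"
    by (simp add: scaled_legendre_deriv_def legendre_deriv_diag_Suc divide_simps)
  then show ?case by (simp add: Suc.IH)
qed

lemma scaled_legendre_deriv_subdiag: "scaled_legendre_deriv (Suc l) l t = (real l + 1) * t / 2 ^ l"
proof -
  have "fact (Suc l + l) = (2 * real l + 1) * (fact (l + l) :: real)"
    by (simp add: algebra_simps)
  moreover have "2 * real l + 1 > 0" by simp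
  ultimately have "scaled_legendre_deriv (Suc l) l t = (real l + 1) * t * scaled_legendre_deriv l l t"
    by (simp add: scaled_legendre_deriv_def legendre_deriv_subdiag legendre_deriv_diag_Suc divide_simps)
      (simp add: algebra_simps)
  then show ?thesis by (simp add: scaled_legendre_deriv_diag)
qed

section \<open>The functions \<open>calA\<close>\<close>

lemma has_real_derivative_sqrt_power_mult_poly:
  assumes "1 - t\<^sup>2 > 0"
  shows "((\<lambda>t. sqrt (1 - t\<^sup>2) ^ m * poly p t) has_real_derivative
      real m * sqrt (1 - t\<^sup>2) ^ (m - 1) * (- t / sqrt (1 - t\<^sup>2)) * poly p t
      + sqrt (1 - t\<^sup>2) ^ m * poly (pderiv p) t) (at t)"
  using assms by (auto intro!: derivative_eq_intros) (simp add: divide_inverse)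

lemma sin_sq_deriv_assoc_legendre:
  assumes "0 \<le> \<theta>" "\<theta> \<le> pi"
  shows "(sin \<theta>)\<^sup>2 * deriv (assoc_legendre k m) (cos \<theta>) =
    sin \<theta> ^ m * ((sin \<theta>)\<^sup>2 * legendre_deriv k (Suc m) (cos \<theta>)
      - real m * cos \<theta> * legendre_deriv k m (cos \<theta>))"
proof (cases "sin \<theta> = 0")
  case True
  \<comment> \<open>at \<open>cos \<theta> = \<plusminus>1\<close> the derivative may not exist, but it is multiplied by zero\<close>
  then show ?thesis by (cases m) simp_all
next
  case False
  then have "sin \<theta> > 0" using assms sin_ge_zero[of \<theta>] by linarith
  then have sqrt_eq: "sqrt (1 - (cos \<theta>)\<^sup>2) = sin \<theta>"
    by (simp add: sin_squared_eq[symmetric])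
  have pos: "1 - (cos \<theta>)\<^sup>2 > 0"
    using \<open>sin \<theta> > 0\<close> by (simp add: sin_squared_eq[symmetric])
  have expand: "assoc_legendre k m = (\<lambda>t. sqrt (1 - t\<^sup>2) ^ m * poly ((pderiv ^^ m) (legendre k)) t)"
    by (simp add: assoc_legendre_def fun_eq_iff)
  have "deriv (assoc_legendre k m) (cos \<theta>) =
      real m * sqrt (1 - (cos \<theta>)\<^sup>2) ^ (m - 1) * (- cos \<theta> / sqrt (1 - (cos \<theta>)\<^sup>2))
        * poly ((pderiv ^^ m) (legendre k)) (cos \<theta>)
      + sqrt (1 - (cos \<theta>)\<^sup>2) ^ m * poly (pderiv ((pderiv ^^ m) (legendre k))) (cos \<theta>)"
    unfolding expand by (rule DERIV_imp_deriv[OF has_real_derivative_sqrt_power_mult_poly[OF pos]])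
  then have deriv_eq: "deriv (assoc_legendre k m) (cos \<theta>) =
      real m * sin \<theta> ^ (m - 1) * (- cos \<theta> / sin \<theta>) * legendre_deriv k m (cos \<theta>)
      + sin \<theta> ^ m * legendre_deriv k (Suc m) (cos \<theta>)"
    by (simp add: sqrt_eq legendre_deriv_def)
  show ?thesis
  proof (cases m)
    case 0
    then show ?thesis using deriv_eq by simp
  next
    case (Suc j)
    then show ?thesis
      unfolding deriv_eq using False by (simp add: field_simps power2_eq_square)
  qed
qed

lemma calA_eq_legendre_deriv:
  assumes "0 \<le> \<theta>" "\<theta> \<le> pi"
  shows "calA m n \<theta> = (real n + 1 + real m) / 2 * sin \<theta> ^ m * legendre_deriv n m (cos \<theta>)"
proof -
  have "sqrt (1 - (cos \<theta>)\<^sup>2) = sin \<theta>"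
    using sin_ge_zero[OF assms] by (simp add: sin_squared_eq[symmetric])
  then have "assoc_legendre (n + 1) m (cos \<theta>) = sin \<theta> ^ m * legendre_deriv (Suc n) m (cos \<theta>)"
    by (simp add: assoc_legendre_def legendre_deriv_def)
  then have "calA m n \<theta> = sin \<theta> ^ m / 2 *
      ((1 - (cos \<theta>)\<^sup>2) * legendre_deriv (Suc n) (Suc m) (cos \<theta>)
       + (real n + 1 - real m) * cos \<theta> * legendre_deriv (Suc n) m (cos \<theta>))"
    unfolding calA_def sin_sq_deriv_assoc_legendre[OF assms]
    by (simp add: sin_squared_eq algebra_simps)
  then show ?thesis
    by (simp add: legendre_deriv_one_minus_sq)
qed

section \<open>Quaternion frames\<close>

lemmas quat_defs = times_quat_def plus_quat_def minus_quat_def uminus_quat_def scaleR_quat_def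
  of_real_def one_quat_def zero_quat_def qe1_def qe2_def qe3_def

definition frame0 :: "nat \<Rightarrow> real \<Rightarrow> quat" where
  "frame0 l \<phi> = of_real (cos (real l * \<phi>)) - sin (real l * \<phi>) *\<^sub>R qe3"

definition frame1 :: "nat \<Rightarrow> real \<Rightarrow> quat" where
  "frame1 l \<phi> = cos (real (l + 1) * \<phi>) *\<^sub>R qe1 + sin (real (l + 1) * \<phi>) *\<^sub>R qe2"

lemma frame1_0_mult_frame0: "frame1 0 \<phi> * frame0 l \<phi> = frame1 l \<phi>"
  by (simp add: frame0_def frame1_def quat_defs distrib_right cos_add sin_add)

lemma frame1_0_mult_frame1: "frame1 0 \<phi> * frame1 l \<phi> = - frame0 l \<phi>"
proof -
  have pythagoras: "cos \<phi> * (cos \<phi> * x) + sin \<phi> * (sin \<phi> * x) = x" for x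
    using sin_cos_squared_add[of \<phi>] by algebra
  show ?thesis
    by (simp add: frame0_def frame1_def quat_defs distrib_right cos_add sin_add algebra_simps pythagoras)
qed

lemma frame0_Suc: "(of_real (cos \<phi>) - sin \<phi> *\<^sub>R qe3) * frame0 l \<phi> = frame0 (Suc l) \<phi>"
  by (simp add: frame0_def quat_defs distrib_right cos_add sin_add algebra_simps)

lemma frame0_0 [simp]: "frame0 0 \<phi> = 1"
  by (simp add: frame0_def)

lemma frame1_0_sq: "frame1 0 \<phi> * frame1 0 \<phi> = -1"
  using frame1_0_mult_frame1[of \<phi> 0] by simp

lemma power_eq_frame0:
  "(of_real (\<rho> * cos \<phi>) - (\<rho> * sin \<phi>) *\<^sub>R qe3) ^ l = \<rho> ^ l *\<^sub>R frame0 l \<phi>"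
proof (induction l)
  case (Suc l)
  have "(of_real (\<rho> * cos \<phi>) - (\<rho> * sin \<phi>) *\<^sub>R qe3) ^ Suc l
      = (of_real (\<rho> * cos \<phi>) - (\<rho> * sin \<phi>) *\<^sub>R qe3) * (\<rho> ^ l *\<^sub>R frame0 l \<phi>)"
    by (simp only: power_Suc Suc.IH)
  also have "\<dots> = (\<rho> *\<^sub>R (of_real (cos \<phi>) - sin \<phi> *\<^sub>R qe3)) * (\<rho> ^ l *\<^sub>R frame0 l \<phi>)"
    by (simp add: of_real_def scaleR_diff_right)
  also have "\<dots> = \<rho> ^ Suc l *\<^sub>R frame0 (Suc l) \<phi>"
    by (simp add: frame0_Suc)
  finally show ?case .
qed simp

lemma mult_frame_combination:
  "(of_real a + b *\<^sub>R frame1 0 \<phi>) * (p *\<^sub>R frame0 l \<phi> + q *\<^sub>R frame1 l \<phi>) =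
     (a * p - b * q) *\<^sub>R frame0 l \<phi> + (a * q + b * p) *\<^sub>R frame1 l \<phi>"
proof -
  have scalar_part: "of_real a * (p *\<^sub>R frame0 l \<phi> + q *\<^sub>R frame1 l \<phi>)
      = (a * p) *\<^sub>R frame0 l \<phi> + (a * q) *\<^sub>R frame1 l \<phi>"
    by (simp add: scaleR_conv_of_real[symmetric] scaleR_add_right)
  have vector_part: "(b *\<^sub>R frame1 0 \<phi>) * (p *\<^sub>R frame0 l \<phi> + q *\<^sub>R frame1 l \<phi>)
      = (- (b * q)) *\<^sub>R frame0 l \<phi> + (b * p) *\<^sub>R frame1 l \<phi>"
    by (simp add: distrib_left frame1_0_mult_frame0 frame1_0_mult_frame1 algebra_simps)
  show ?thesis
    unfolding distrib_right scalar_part vector_part by (simp add: algebra_simps)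
qed

lemma vecq_spherical:
  "vecq (r * cos \<theta>) (r * sin \<theta> * cos \<phi>) (r * sin \<theta> * sin \<phi>)
     = of_real (r * cos \<theta>) + (r * sin \<theta>) *\<^sub>R frame1 0 \<phi>"
  by (simp add: vecq_def frame1_def scaleR_add_right)

lemma vecq_cnj_spherical:
  "vecq_cnj (r * cos \<theta>) (r * sin \<theta> * cos \<phi>) (r * sin \<theta> * sin \<phi>)
     = of_real (r * cos \<theta>) - (r * sin \<theta>) *\<^sub>R frame1 0 \<phi>"
  by (simp add: vecq_cnj_def frame1_def scaleR_add_right)

section \<open>The polynomials \<open>A_n^l\<close>\<close>

lemma An_frame_decomposition:
  assumes "0 \<le> \<theta>" "\<theta> \<le> pi"
  shows "An n l r \<theta> \<phi> =
    (2 ^ l * r ^ n * sin \<theta> ^ l * scaled_legendre_deriv n l (cos \<theta>)) *\<^sub>R frame0 l \<phi>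
    + (2 ^ l * r ^ n * sin \<theta> ^ (l + 1) * scaled_legendre_deriv n (l + 1) (cos \<theta>)) *\<^sub>R frame1 l \<phi>"
proof -
  define c where "c = 2 ^ (l + 1) * fact n * r ^ n / fact (n + l + 2)"
  have F: "fact (n + l + 2) = (real n + real l + 2) * fact (n + l + 1)"
    "fact (n + l + 1) = (real n + real l + 1) * fact (n + l)"
    by (simp_all add: algebra_simps)
  have pos: "real n + real l + 1 > 0" "real n + real l + 2 > 0"
    by linarith+
  have "c * (real (n + l + 2) * calA l n \<theta>)
      = 2 ^ l * r ^ n * sin \<theta> ^ l * scaled_legendre_deriv n l (cos \<theta>)"
    unfolding c_def calA_eq_legendre_deriv[OF assms] scaled_legendre_deriv_def F
    using pos by (simp add: divide_simps) (simp add: algebra_simps)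
  moreover have "c * calA (l + 1) n \<theta>
      = 2 ^ l * r ^ n * sin \<theta> ^ (l + 1) * scaled_legendre_deriv n (l + 1) (cos \<theta>)"
    unfolding c_def calA_eq_legendre_deriv[OF assms] scaled_legendre_deriv_def F(1)
    using pos by (simp add: divide_simps)
  moreover have "An n l r \<theta> \<phi>
      = c *\<^sub>R ((real (n + l + 2) * calA l n \<theta>) *\<^sub>R frame0 l \<phi> + calA (l + 1) n \<theta> *\<^sub>R frame1 l \<phi>)"
    by (simp only: An_def c_def frame0_def frame1_def)
  ultimately show ?thesis
    by (simp add: scaleR_add_right)
qed

lemma An_Suc_Suc:
  assumes "0 \<le> \<theta>" "\<theta> \<le> pi" "l \<noteq> k + 2"
  shows "An (k + 2) l r \<theta> \<phi> =
    ((real k + 2) / (2 * (real k + 2 - real l) * (real k + real l + 3))) *\<^sub>R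
      ((of_real ((4 * real k + 8) * r * cos \<theta>) + (2 * r * sin \<theta>) *\<^sub>R frame1 0 \<phi>)
         * An (k + 1) l r \<theta> \<phi>
       - of_real (2 * (real k + 1) * r\<^sup>2) * An k l r \<theta> \<phi>)"
proof -
  define C where "C = (real k + 2) / (2 * (real k + 2 - real l) * (real k + real l + 3))"
  define S where "S n m = scaled_legendre_deriv n m (cos \<theta>)" for n m
  have powers: "r ^ (k + 2) = r ^ k * r * r" "r ^ (k + 1) = r ^ k * r" "sin \<theta> ^ (l + 1) = sin \<theta> ^ l * sin \<theta>"
    by simp_all
  have sin_sq: "1 - (cos \<theta>)\<^sup>2 = sin \<theta> * sin \<theta>"
    using sin_squared_eq[of \<theta>] by (simp add: power2_eq_square)
  have coeff0: "2 ^ l * r ^ (k + 2) * sin \<theta> ^ l * S (k + 2) l =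
      C * ((4 * real k + 8) * r * cos \<theta> * (2 ^ l * r ^ (k + 1) * sin \<theta> ^ l * S (k + 1) l)
        - 2 * r * sin \<theta> * (2 ^ l * r ^ (k + 1) * sin \<theta> ^ (l + 1) * S (k + 1) (l + 1))
        - 2 * (real k + 1) * r\<^sup>2 * (2 ^ l * r ^ k * sin \<theta> ^ l * S k l))"
    unfolding S_def scaled_legendre_deriv_three_term[OF assms(3)] C_def[symmetric] powers sin_sq
    by (simp add: algebra_simps power2_eq_square)
  have coeff1: "2 ^ l * r ^ (k + 2) * sin \<theta> ^ (l + 1) * S (k + 2) (l + 1) =
      C * ((4 * real k + 8) * r * cos \<theta> * (2 ^ l * r ^ (k + 1) * sin \<theta> ^ (l + 1) * S (k + 1) (l + 1))
        + 2 * r * sin \<theta> * (2 ^ l * r ^ (k + 1) * sin \<theta> ^ l * S (k + 1) l)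
        - 2 * (real k + 1) * r\<^sup>2 * (2 ^ l * r ^ k * sin \<theta> ^ (l + 1) * S k (l + 1)))"
    unfolding S_def scaled_legendre_deriv_three_term_Suc[OF assms(3)] C_def[symmetric] powers
    by (simp add: algebra_simps power2_eq_square)
  show ?thesis
    unfolding An_frame_decomposition[OF assms(1,2)] mult_frame_combination C_def[symmetric] S_def[symmetric]
      coeff0 coeff1 scaleR_conv_of_real[symmetric]
    by (simp add: algebra_simps)
qed

lemma An_diag:
  assumes "0 \<le> \<theta>" "\<theta> \<le> pi"
  shows "An l l r \<theta> \<phi> = (r * sin \<theta>) ^ l *\<^sub>R frame0 l \<phi>"
proof -
  have "scaled_legendre_deriv l (l + 1) (cos \<theta>) = 0"
    by (simp add: scaled_legendre_deriv_def legendre_deriv_eq_0)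
  then show ?thesis
    by (simp add: An_frame_decomposition[OF assms] scaled_legendre_deriv_diag power_mult_distrib)
qed

lemma vecq_combination:
  "of_real \<alpha> * vecq (r * cos \<theta>) (r * sin \<theta> * cos \<phi>) (r * sin \<theta> * sin \<phi>)
   + of_real \<beta> * vecq_cnj (r * cos \<theta>) (r * sin \<theta> * cos \<phi>) (r * sin \<theta> * sin \<phi>)
   = of_real ((\<alpha> + \<beta>) * r * cos \<theta>) + ((\<alpha> - \<beta>) * r * sin \<theta>) *\<^sub>R frame1 0 \<phi>"
  unfolding vecq_spherical vecq_cnj_spherical scaleR_conv_of_real
  by (simp add: algebra_simps)

lemma vecq_mult_cnj:
  "vecq (r * cos \<theta>) (r * sin \<theta> * cos \<phi>) (r * sin \<theta> * sin \<phi>)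
   * vecq_cnj (r * cos \<theta>) (r * sin \<theta> * cos \<phi>) (r * sin \<theta> * sin \<phi>) = of_real (r\<^sup>2)"
proof -
  have "vecq (r * cos \<theta>) (r * sin \<theta> * cos \<phi>) (r * sin \<theta> * sin \<phi>)
      * vecq_cnj (r * cos \<theta>) (r * sin \<theta> * cos \<phi>) (r * sin \<theta> * sin \<phi>)
      = ((r * cos \<theta>)\<^sup>2 + (r * sin \<theta>)\<^sup>2) *\<^sub>R 1"
    unfolding vecq_spherical vecq_cnj_spherical of_real_def
    by (simp add: algebra_simps frame1_0_sq power2_eq_square)
  also have "(r * cos \<theta>)\<^sup>2 + (r * sin \<theta>)\<^sup>2 = r\<^sup>2"
    by (simp add: power_mult_distrib flip: distrib_left)
  finally show ?thesis
    by (simp add: of_real_def)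
qed

lemma An_Suc_diag:
  fixes r \<theta> \<phi> :: real
  assumes "0 \<le> \<theta>" "\<theta> \<le> pi"
  defines "x \<equiv> vecq (r * cos \<theta>) (r * sin \<theta> * cos \<phi>) (r * sin \<theta> * sin \<phi>)"
      and "xc \<equiv> vecq_cnj (r * cos \<theta>) (r * sin \<theta> * cos \<phi>) (r * sin \<theta> * sin \<phi>)"
  shows "An (l + 1) l r \<theta> \<phi> =
    (1/4) *\<^sub>R ((of_real (real (2 * l + 3)) * x + of_real (real (2 * l + 1)) * xc) * An l l r \<theta> \<phi>)"
proof -
  have diag: "An l l r \<theta> \<phi> = (r * sin \<theta>) ^ l *\<^sub>R frame0 l \<phi> + 0 *\<^sub>R frame1 l \<phi>"
    by (simp add: An_diag[OF assms(1,2)])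
  have coeff0: "2 ^ l * r ^ (l + 1) * sin \<theta> ^ l * scaled_legendre_deriv (l + 1) l (cos \<theta>)
      = 1 / 4 * ((4 * real l + 4) * r * cos \<theta> * (r * sin \<theta>) ^ l - 2 * r * sin \<theta> * 0)"
    by (simp add: scaled_legendre_deriv_subdiag power_mult_distrib field_simps)
  have coeff1: "2 ^ l * r ^ (l + 1) * sin \<theta> ^ (l + 1) * scaled_legendre_deriv (l + 1) (l + 1) (cos \<theta>)
      = 1 / 4 * ((4 * real l + 4) * r * cos \<theta> * 0 + 2 * r * sin \<theta> * (r * sin \<theta>) ^ l)"
    by (simp add: scaled_legendre_deriv_diag power_mult_distrib algebra_simps)
  have "An (l + 1) l r \<theta> \<phi> =
      (1 / 4) *\<^sub>R ((of_real ((4 * real l + 4) * r * cos \<theta>) + (2 * r * sin \<theta>) *\<^sub>R frame1 0 \<phi>)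
        * An l l r \<theta> \<phi>)"
    unfolding diag mult_frame_combination unfolding An_frame_decomposition[OF assms(1,2)] coeff0 coeff1
    by (simp add: scaleR_add_right)
  then show ?thesis
    unfolding x_def xc_def vecq_combination by (simp add: algebra_simps)
qed

lemma An_recurrence:
  fixes r \<theta> \<phi> :: real
  assumes "0 \<le> \<theta>" "\<theta> \<le> pi" "1 \<le> n" "l \<le> n - 1"
  defines "x \<equiv> vecq (r * cos \<theta>) (r * sin \<theta> * cos \<phi>) (r * sin \<theta> * sin \<phi>)"
      and "xc \<equiv> vecq_cnj (r * cos \<theta>) (r * sin \<theta> * cos \<phi>) (r * sin \<theta> * sin \<phi>)"
  shows "An (n + 1) l r \<theta> \<phi> =
    (real (n + 1) / (2 * real (n - l + 1) * real (n + l + 2))) *\<^sub>R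
      ((of_real (real (2 * n + 3)) * x + of_real (real (2 * n + 1)) * xc) * An n l r \<theta> \<phi>
       - of_real (real (2 * n)) * x * xc * An (n - 1) l r \<theta> \<phi>)"
proof -
  obtain k where n: "n = k + 1" and "l \<le> k"
    using assms(3,4) by (cases n) auto
  have coeff: "real (n + 1) / (2 * real (n - l + 1) * real (n + l + 2))
      = (real k + 2) / (2 * (real k + 2 - real l) * (real k + real l + 3))"
    using \<open>l \<le> k\<close> by (simp add: n of_nat_diff algebra_simps)
  have comb: "of_real (real (2 * n + 3)) * x + of_real (real (2 * n + 1)) * xc
      = of_real ((4 * real k + 8) * r * cos \<theta>) + (2 * r * sin \<theta>) *\<^sub>R frame1 0 \<phi>"
    unfolding x_def xc_def vecq_combination by (simp add: n algebra_simps)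
  have "x * xc = of_real (r\<^sup>2)"
    unfolding x_def xc_def by (rule vecq_mult_cnj)
  then have "of_real (real (2 * n)) * x * xc = of_real (real (2 * n) * r\<^sup>2)"
    by (simp only: mult.assoc of_real_mult)
  also have "\<dots> = of_real (2 * (real k + 1) * r\<^sup>2)"
    by (simp add: n add.commute)
  finally have xx: "of_real (real (2 * n)) * x * xc = of_real (2 * (real k + 1) * r\<^sup>2)" .
  have idx: "k + 1 + 1 = k + 2" "k + 1 - 1 = k"
    by simp_all
  show ?thesis
    unfolding coeff comb xx unfolding n idx
    using \<open>l \<le> k\<close> by (intro An_Suc_Suc assms(1,2)) simp
qed

theorem mainTheorem3:
  fixes r \<theta> \<phi> :: real
  assumes "r \<ge> 0" and "0 \<le> \<theta>" and "\<theta> \<le> pi"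
  defines "x \<equiv> vecq (r * cos \<theta>) (r * sin \<theta> * cos \<phi>) (r * sin \<theta> * sin \<phi>)"
      and "xc \<equiv> vecq_cnj (r * cos \<theta>) (r * sin \<theta> * cos \<phi>) (r * sin \<theta> * sin \<phi>)"
  shows "(\<forall>n l. 1 \<le> n \<longrightarrow> l \<le> n - 1 \<longrightarrow>
            An (n + 1) l r \<theta> \<phi> =
              (real (n + 1) / (2 * real (n - l + 1) * real (n + l + 2))) *\<^sub>R
                ((of_real (real (2 * n + 3)) * x + of_real (real (2 * n + 1)) * xc) * An n l r \<theta> \<phi>
                 - of_real (real (2 * n)) * x * xc * An (n - 1) l r \<theta> \<phi>))
       \<and> (\<forall>l. An (l + 1) l r \<theta> \<phi> =
              (1/4) *\<^sub>R ((of_real (real (2 * l + 3)) * x + of_real (real (2 * l + 1)) * xc) * An l l r \<theta> \<phi>))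
       \<and> (\<forall>l. An l l r \<theta> \<phi> = (of_real (r * sin \<theta> * cos \<phi>) - (r * sin \<theta> * sin \<phi>) *\<^sub>R qe3) ^ l)"
  using assms(2,3) unfolding x_def xc_def
  by (intro conjI allI impI An_recurrence An_Suc_diag) (simp_all add: An_diag power_eq_frame0 del: of_real_mult)

end
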